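(* Let $G$ be a locally compact Hausdorff group acting continuously on a locally compact Hausdorff space $X$. Then $C_0(X)$ is a principal (respectively numerable principal) $G$-$C_0(Y)$-algebra for some locally compact Hausdorff $G$-space $Y$ if and only if $X\to X/G$ is a principal (respectively numerable principal) $G$-bundle.
   Context: $C_0(X)$ carries the action $(\alpha_gf)(x)=f(xg)$. A principal $G$-bundle $Y\to Y/G$: $Y$ has an open cover by $G$-invariant sets $U$ each admitting a continuous $G$-equivariant map $U\to G$; numerable if such a cover admits a subordinate partition of unity. A C*-algebra $A$ with $G$-action is a principal $G$-$C_0(Y)$-algebra if there is a $G$-equivariant $*$-homomorphism $\chi:C_0(Y)\to ZM(A)$ (center of the multiplier algebra, with the extended action), where $Y$ is a locally compact Hausdorff $G$-space with $Y\to Y/G$ a principal $G$-bundle, such that $\chi(C_0(Y))A$ is norm-dense in $A$; numerable if $Y\to Y/G$ is numerable. *)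

theory Defs
  imports "HOL-Analysis.Analysis" "HOL-Algebra.Group"
begin

definition topological_group :: "('g, 'm) monoid_scheme \<Rightarrow> 'g topology \<Rightarrow> bool" where
  "topological_group G TG \<longleftrightarrow> group G \<and> topspace TG = carrier G \<and>
     continuous_map (prod_topology TG TG) TG (\<lambda>(g, h). g \<otimes>\<^bsub>G\<^esub> h) \<and>
     continuous_map TG TG (\<lambda>g. inv\<^bsub>G\<^esub> g)"

definition right_action ::
  "('g, 'm) monoid_scheme \<Rightarrow> 'g topology \<Rightarrow> 'x topology \<Rightarrow> ('x \<Rightarrow> 'g \<Rightarrow> 'x) \<Rightarrow> bool" where
  "right_action G TG TX act \<longleftrightarrow>
     (\<forall>x\<in>topspace TX. \<forall>g\<in>carrier G. act x g \<in> topspace TX) \<and>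
     (\<forall>x\<in>topspace TX. act x \<one>\<^bsub>G\<^esub> = x) \<and>
     (\<forall>x\<in>topspace TX. \<forall>g\<in>carrier G. \<forall>h\<in>carrier G. act (act x g) h = act x (g \<otimes>\<^bsub>G\<^esub> h)) \<and>
     continuous_map (prod_topology TX TG) TX (\<lambda>(x, g). act x g)"

definition invariant_set :: "('g, 'm) monoid_scheme \<Rightarrow> ('x \<Rightarrow> 'g \<Rightarrow> 'x) \<Rightarrow> 'x set \<Rightarrow> bool" where
  "invariant_set G act U \<longleftrightarrow> (\<forall>y\<in>U. \<forall>g\<in>carrier G. act y g \<in> U)"

definition principal_cover ::
  "('g, 'm) monoid_scheme \<Rightarrow> 'g topology \<Rightarrow> 'y topology \<Rightarrow> ('y \<Rightarrow> 'g \<Rightarrow> 'y) \<Rightarrow> 'y set set \<Rightarrow> bool" where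
  "principal_cover G TG TY act \<U> \<longleftrightarrow>
     \<Union>\<U> = topspace TY \<and>
     (\<forall>U\<in>\<U>. openin TY U \<and> invariant_set G act U \<and>
        (\<exists>\<phi>. continuous_map (subtopology TY U) TG \<phi> \<and>
              (\<forall>y\<in>U. \<forall>g\<in>carrier G. \<phi> (act y g) = \<phi> y \<otimes>\<^bsub>G\<^esub> g)))"

definition principal_bundle ::
  "('g, 'm) monoid_scheme \<Rightarrow> 'g topology \<Rightarrow> 'y topology \<Rightarrow> ('y \<Rightarrow> 'g \<Rightarrow> 'y) \<Rightarrow> bool" where
  "principal_bundle G TG TY act \<longleftrightarrow> (\<exists>\<U>. principal_cover G TG TY act \<U>)"

text \<open>Partition of unity on the orbit space Y/G subordinate to the (invariant) cover,
  expressed through G-invariant functions on Y (functions on Y/G), supports taken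
  in Y (for the open orbit map, preimage of closure = closure of preimage),
  local finiteness witnessed by G-invariant open sets (= open sets of Y/G).\<close>
definition numerable_principal_bundle ::
  "('g, 'm) monoid_scheme \<Rightarrow> 'g topology \<Rightarrow> 'y topology \<Rightarrow> ('y \<Rightarrow> 'g \<Rightarrow> 'y) \<Rightarrow> bool" where
  "numerable_principal_bundle G TG TY act \<longleftrightarrow>
     (\<exists>\<U> (\<rho> :: 'y set \<Rightarrow> 'y \<Rightarrow> real). principal_cover G TG TY act \<U> \<and>
        (\<forall>U\<in>\<U>. continuous_map TY euclideanreal (\<rho> U) \<and>
           (\<forall>y\<in>topspace TY. \<forall>g\<in>carrier G. \<rho> U (act y g) = \<rho> U y) \<and>
           (\<forall>y\<in>topspace TY. 0 \<le> \<rho> U y) \<and>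
           TY closure_of {y \<in> topspace TY. \<rho> U y \<noteq> 0} \<subseteq> U) \<and>
        (\<forall>y\<in>topspace TY. \<exists>W. openin TY W \<and> invariant_set G act W \<and> y \<in> W \<and>
           finite {U\<in>\<U>. W \<inter> (TY closure_of {z \<in> topspace TY. \<rho> U z \<noteq> 0}) \<noteq> {}}) \<and>
        (\<forall>y\<in>topspace TY. (\<Sum>U\<in>{U\<in>\<U>. \<rho> U y \<noteq> 0}. \<rho> U y) = 1))"

definition C0 :: "'x topology \<Rightarrow> ('x \<Rightarrow> complex) set" where
  "C0 TX = {f. continuous_map TX euclidean f \<and> (\<forall>x. x \<notin> topspace TX \<longrightarrow> f x = 0) \<and>
               (\<forall>e>0. compactin TX {x \<in> topspace TX. e \<le> norm (f x)})}"

definition transl :: "'x topology \<Rightarrow> ('x \<Rightarrow> 'g \<Rightarrow> 'x) \<Rightarrow> 'g \<Rightarrow> ('x \<Rightarrow> complex) \<Rightarrow> ('x \<Rightarrow> complex)" where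
  "transl TX act g f = (\<lambda>x. if x \<in> topspace TX then f (act x g) else 0)"

type_synonym 'x mult = "(('x \<Rightarrow> complex) \<Rightarrow> ('x \<Rightarrow> complex)) \<times> (('x \<Rightarrow> complex) \<Rightarrow> ('x \<Rightarrow> complex))"

definition fmul :: "('x \<Rightarrow> complex) \<Rightarrow> ('x \<Rightarrow> complex) \<Rightarrow> ('x \<Rightarrow> complex)" where
  "fmul a b = (\<lambda>x. a x * b x)"

definition fstar :: "('x \<Rightarrow> complex) \<Rightarrow> ('x \<Rightarrow> complex)" where
  "fstar a = (\<lambda>x. cnj (a x))"

text \<open>Double centralizers (L, R) of A: a (L b) = (R a) b.\<close>
definition multipliers :: "('x \<Rightarrow> complex) set \<Rightarrow> 'x mult set" where
  "multipliers A = {(L, R). L \<in> A \<rightarrow>\<^sub>E A \<and> R \<in> A \<rightarrow>\<^sub>E A \<and>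
                      (\<forall>a\<in>A. \<forall>b\<in>A. fmul a (L b) = fmul (R a) b)}"

definition mmult :: "('x \<Rightarrow> complex) set \<Rightarrow> 'x mult \<Rightarrow> 'x mult \<Rightarrow> 'x mult" where
  "mmult A m n = (compose A (fst m) (fst n), compose A (snd n) (snd m))"

definition madd :: "('x \<Rightarrow> complex) set \<Rightarrow> 'x mult \<Rightarrow> 'x mult \<Rightarrow> 'x mult" where
  "madd A m n = (restrict (\<lambda>a x. fst m a x + fst n a x) A, restrict (\<lambda>a x. snd m a x + snd n a x) A)"

definition mscale :: "('x \<Rightarrow> complex) set \<Rightarrow> complex \<Rightarrow> 'x mult \<Rightarrow> 'x mult" where
  "mscale A c m = (restrict (\<lambda>a x. c * fst m a x) A, restrict (\<lambda>a x. c * snd m a x) A)"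

definition madj :: "('x \<Rightarrow> complex) set \<Rightarrow> 'x mult \<Rightarrow> 'x mult" where
  "madj A m = (restrict (\<lambda>a. fstar (snd m (fstar a))) A, restrict (\<lambda>a. fstar (fst m (fstar a))) A)"

definition center_multipliers :: "('x \<Rightarrow> complex) set \<Rightarrow> 'x mult set" where
  "center_multipliers A = {m \<in> multipliers A. \<forall>n\<in>multipliers A. mmult A m n = mmult A n m}"

definition mact :: "('g, 'm) monoid_scheme \<Rightarrow> ('x \<Rightarrow> complex) set \<Rightarrow>
    ('g \<Rightarrow> ('x \<Rightarrow> complex) \<Rightarrow> ('x \<Rightarrow> complex)) \<Rightarrow> 'g \<Rightarrow> 'x mult \<Rightarrow> 'x mult" where
  "mact G A \<beta> g m = (restrict (\<lambda>a. \<beta> g (fst m (\<beta> (inv\<^bsub>G\<^esub> g) a))) A,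
                      restrict (\<lambda>a. \<beta> g (snd m (\<beta> (inv\<^bsub>G\<^esub> g) a))) A)"

text \<open>A (a C*-algebra of functions, here C_0(X)) with G-action beta is a G-C_0(Y)-algebra
  through chi: G-equivariant *-homomorphism C_0(Y) -> ZM(A) with chi(C_0(Y))A
  having norm-dense linear span in A.\<close>
definition G_C0_algebra_via ::
  "('g, 'm) monoid_scheme \<Rightarrow> 'x topology \<Rightarrow> ('g \<Rightarrow> ('x \<Rightarrow> complex) \<Rightarrow> ('x \<Rightarrow> complex)) \<Rightarrow>
   'y topology \<Rightarrow> ('y \<Rightarrow> 'g \<Rightarrow> 'y) \<Rightarrow> (('y \<Rightarrow> complex) \<Rightarrow> 'x mult) \<Rightarrow> bool" where
  "G_C0_algebra_via G TX \<beta> TY actY chi \<longleftrightarrow>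
     (let A = C0 TX in
      (\<forall>f\<in>C0 TY. chi f \<in> center_multipliers A) \<and>
      (\<forall>f\<in>C0 TY. \<forall>h\<in>C0 TY. chi (\<lambda>y. f y + h y) = madd A (chi f) (chi h)) \<and>
      (\<forall>c. \<forall>f\<in>C0 TY. chi (\<lambda>y. c * f y) = mscale A c (chi f)) \<and>
      (\<forall>f\<in>C0 TY. \<forall>h\<in>C0 TY. chi (fmul f h) = mmult A (chi f) (chi h)) \<and>
      (\<forall>f\<in>C0 TY. chi (fstar f) = madj A (chi f)) \<and>
      (\<forall>g\<in>carrier G. \<forall>f\<in>C0 TY. chi (transl TY actY g f) = mact G A \<beta> g (chi f)) \<and>
      (\<forall>a\<in>A. \<forall>e>0. \<exists>(n::nat) fs bs. (\<forall>i<n. fs i \<in> C0 TY \<and> bs i \<in> A) \<and>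
          (\<forall>x\<in>topspace TX. norm (a x - (\<Sum>i<n. fst (chi (fs i)) (bs i) x)) < e)))"

definition principal_G_C0_algebra ::
  "('g, 'm) monoid_scheme \<Rightarrow> 'g topology \<Rightarrow> 'x topology \<Rightarrow> ('g \<Rightarrow> ('x \<Rightarrow> complex) \<Rightarrow> ('x \<Rightarrow> complex)) \<Rightarrow>
   'y topology \<Rightarrow> ('y \<Rightarrow> 'g \<Rightarrow> 'y) \<Rightarrow> bool" where
  "principal_G_C0_algebra G TG TX \<beta> TY actY \<longleftrightarrow>
     locally_compact_space TY \<and> Hausdorff_space TY \<and> right_action G TG TY actY \<and>
     principal_bundle G TG TY actY \<and> (\<exists>chi. G_C0_algebra_via G TX \<beta> TY actY chi)"

definition numerable_principal_G_C0_algebra ::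
  "('g, 'm) monoid_scheme \<Rightarrow> 'g topology \<Rightarrow> 'x topology \<Rightarrow> ('g \<Rightarrow> ('x \<Rightarrow> complex) \<Rightarrow> ('x \<Rightarrow> complex)) \<Rightarrow>
   'y topology \<Rightarrow> ('y \<Rightarrow> 'g \<Rightarrow> 'y) \<Rightarrow> bool" where
  "numerable_principal_G_C0_algebra G TG TX \<beta> TY actY \<longleftrightarrow>
     principal_G_C0_algebra G TG TX \<beta> TY actY \<and> numerable_principal_bundle G TG TY actY"

end

theory Submission
  imports Defs
begin

text \<open>If X \<rightarrow> X/G is principal, C0(X) is a principal G-C0(X)-algebra via pointwise
  multiplication. Conversely, a structure map chi : C0(Y) \<rightarrow> ZM(C0(X)) sends each f to
  multiplication by a function, so for every x the map f \<mapsto> (chi f)(x) is a character of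
  C0(Y); density of chi(C0(Y))C0(X) makes it nonzero, hence it is evaluation at a point p(x).
  The map p : X \<rightarrow> Y so obtained is continuous and G-equivariant, and principal bundle
  structures, as well as invariant partitions of unity, pull back along equivariant maps.\<close>

lemma closedin_norm_superlevel:
  assumes "continuous_map X euclidean (f :: 'a \<Rightarrow> 'b::real_normed_vector)"
  shows "closedin X {x \<in> topspace X. e \<le> norm (f x)}"
proof -
  have "closedin euclidean {z::'b. e \<le> norm z}"
    by (simp add: closed_Collect_le continuous_on_const continuous_on_norm_id)
  from closedin_continuous_map_preimage[OF assms this] show ?thesis by simp
qed

lemma continuous_map_mult_euclidean [continuous_intros]:
  fixes f :: "'a \<Rightarrow> 'b::real_normed_algebra"
  shows "continuous_map X euclidean f \<Longrightarrow> continuous_map X euclidean g \<Longrightarrow>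
    continuous_map X euclidean (\<lambda>x. f x * g x)"
  by (simp add: continuous_map_atin tendsto_mult)

lemma continuous_map_compose_euclidean:
  "continuous_map X euclidean f \<Longrightarrow> continuous_on UNIV h \<Longrightarrow> continuous_map X euclidean (\<lambda>x. h (f x))"
  using continuous_map_compose[of X euclidean f euclidean h] by (simp add: o_def)

lemma continuous_map_locally_eq:
  assumes "\<And>x. x \<in> topspace X \<Longrightarrow>
    \<exists>N g. openin X N \<and> x \<in> N \<and> continuous_map X Y g \<and> (\<forall>z\<in>N. f z = g z)"
  shows "continuous_map X Y f"
proof -
  obtain N g where N: "\<And>x. x \<in> topspace X \<Longrightarrow> openin X (N x) \<and> x \<in> N x \<and>
      continuous_map X Y (g x) \<and> (\<forall>z\<in>N x. f z = g x z)"
    using assms by metis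
  show ?thesis
  proof (rule pasting_lemma[where I = "topspace X" and T = N and f = g])
    show "continuous_map (subtopology X (N x)) Y (g x)" if "x \<in> topspace X" for x
      using N[OF that] by (blast intro: continuous_map_from_subtopology)
    show "g i z = g j z" if "i \<in> topspace X" "j \<in> topspace X" "z \<in> topspace X \<inter> N i \<inter> N j" for i j z
      using N[OF that(1)] N[OF that(2)] that(3) by auto
    show "\<exists>j. j \<in> topspace X \<and> x \<in> N j \<and> f x = g j x" if "x \<in> topspace X" for x
      using N that by blast
  qed (use N in blast)
qed

subsection \<open>Functions vanishing at infinity\<close>

lemma C0I:
  assumes "continuous_map X euclidean f" "\<And>x. x \<notin> topspace X \<Longrightarrow> f x = 0"
    "\<And>e. e > 0 \<Longrightarrow> \<exists>K. compactin X K \<and> {x \<in> topspace X. e \<le> norm (f x)} \<subseteq> K"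
  shows "f \<in> C0 X"
  unfolding C0_def
proof (intro CollectI conjI allI impI)
  fix e :: real assume "e > 0"
  then obtain K where "compactin X K" "{x \<in> topspace X. e \<le> norm (f x)} \<subseteq> K"
    using assms(3) by blast
  then show "compactin X {x \<in> topspace X. e \<le> cmod (f x)}"
    using closed_compactin closedin_norm_superlevel[OF assms(1)] by blast
qed (use assms in auto)

lemma continuous_map_C0: "f \<in> C0 X \<Longrightarrow> continuous_map X euclidean f"
  by (simp add: C0_def)

lemma C0_outside: "f \<in> C0 X \<Longrightarrow> x \<notin> topspace X \<Longrightarrow> f x = 0"
  by (simp add: C0_def)

lemma compactin_C0_superlevel: "f \<in> C0 X \<Longrightarrow> e > 0 \<Longrightarrow> compactin X {x \<in> topspace X. e \<le> norm (f x)}"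
  by (simp add: C0_def)

lemma C0_dominated:
  assumes f: "f \<in> C0 X" and h: "continuous_map X euclidean h"
    and dom: "\<And>x. norm (h x) \<le> C * norm (f x)"
  shows "h \<in> C0 X"
proof (rule C0I[OF h])
  show "h x = 0" if "x \<notin> topspace X" for x
    using dom[of x] C0_outside[OF f that] by simp
  fix e :: real assume e: "e > 0"
  show "\<exists>K. compactin X K \<and> {x \<in> topspace X. e \<le> norm (h x)} \<subseteq> K"
  proof (intro exI conjI)
    show "compactin X {x \<in> topspace X. e / (max C 0 + 1) \<le> norm (f x)}"
      using e by (intro compactin_C0_superlevel[OF f]) auto
    show "{x \<in> topspace X. e \<le> norm (h x)} \<subseteq> {x \<in> topspace X. e / (max C 0 + 1) \<le> norm (f x)}"
    proof safe
      fix x assume "x \<in> topspace X" "e \<le> norm (h x)"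
      then have "e \<le> (max C 0 + 1) * norm (f x)"
        using dom[of x] by (smt (verit) mult_right_mono norm_ge_zero)
      then show "e / (max C 0 + 1) \<le> norm (f x)"
        by (simp add: divide_le_eq mult.commute)
    qed
  qed
qed

lemma C0_bounded_mult:
  assumes "f \<in> C0 X" "continuous_map X euclidean t" "\<And>x. norm (t x) \<le> M"
  shows "(\<lambda>x. t x * f x) \<in> C0 X"
proof (rule C0_dominated[OF assms(1)])
  show "continuous_map X euclidean (\<lambda>x. t x * f x)"
    using assms(2) continuous_map_C0[OF assms(1)] by (rule continuous_map_mult_euclidean)
  show "norm (t x * f x) \<le> M * norm (f x)" for x
    by (simp add: norm_mult assms(3) mult_right_mono)
qed

lemma C0_compose:
  assumes "f \<in> C0 X" "continuous_on UNIV h" "\<And>z. norm (h z) \<le> C * norm z"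
  shows "(\<lambda>x. h (f x)) \<in> C0 X"
  by (rule C0_dominated[OF assms(1) continuous_map_compose_euclidean[OF continuous_map_C0 assms(2)]])
     (use assms in auto)

lemma C0_add:
  assumes f: "f \<in> C0 X" and g: "g \<in> C0 X"
  shows "(\<lambda>x. f x + g x) \<in> C0 X"
proof (rule C0I)
  show "continuous_map X euclidean (\<lambda>x. f x + g x)"
    using assms by (intro continuous_map_add continuous_map_C0)
  show "f x + g x = 0" if "x \<notin> topspace X" for x
    using C0_outside[OF f that] C0_outside[OF g that] by simp
  fix e :: real assume "e > 0"
  let ?K = "{x \<in> topspace X. e/2 \<le> norm (f x)} \<union> {x \<in> topspace X. e/2 \<le> norm (g x)}"
  have "compactin X ?K"
    using assms \<open>e > 0\<close> by (intro compactin_Un compactin_C0_superlevel) auto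
  moreover have "{x \<in> topspace X. e \<le> norm (f x + g x)} \<subseteq> ?K"
  proof
    fix x assume "x \<in> {x \<in> topspace X. e \<le> norm (f x + g x)}"
    then show "x \<in> ?K" using norm_triangle_ineq[of "f x" "g x"] by auto
  qed
  ultimately show "\<exists>K. compactin X K \<and> {x \<in> topspace X. e \<le> norm (f x + g x)} \<subseteq> K"
    by blast
qed

lemma C0_bounded:
  assumes "f \<in> C0 X"
  obtains M where "\<And>x. norm (f x) \<le> M"
proof -
  let ?K = "{x \<in> topspace X. 1 \<le> norm (f x)}"
  have "compactin X ?K"
    using compactin_C0_superlevel[OF assms] by simp
  moreover have "continuous_map X euclideanreal (\<lambda>x. norm (f x))"
    using continuous_map_C0[OF assms] by (rule continuous_map_norm)
  ultimately have "compactin euclideanreal ((\<lambda>x. norm (f x)) ` ?K)"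
    by (rule image_compactin)
  then have "bounded ((\<lambda>x. norm (f x)) ` ?K)"
    by (simp add: compact_imp_bounded compactin_euclidean_iff)
  then obtain B where B: "\<And>x. x \<in> ?K \<Longrightarrow> norm (f x) \<le> B"
    unfolding bounded_iff by fastforce
  have "norm (f x) \<le> max 1 B" for x
    using B[of x] C0_outside[OF assms, of x] by (cases "x \<in> topspace X"; cases "1 \<le> norm (f x)") auto
  then show ?thesis using that by blast
qed

lemma C0_mult: assumes "f \<in> C0 X" "g \<in> C0 X" shows "(\<lambda>x. f x * g x) \<in> C0 X"
proof -
  obtain M where "\<And>x. norm (f x) \<le> M" using C0_bounded[OF assms(1)] by blast
  from C0_bounded_mult[OF assms(2) continuous_map_C0[OF assms(1)] this] show ?thesis .
qed

lemma C0_fmul: "f \<in> C0 X \<Longrightarrow> g \<in> C0 X \<Longrightarrow> fmul f g \<in> C0 X"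
  unfolding fmul_def by (rule C0_mult)

lemma C0_scale: "f \<in> C0 X \<Longrightarrow> (\<lambda>x. c * f x) \<in> C0 X"
  using C0_bounded_mult[of f X "\<lambda>x. c" "norm c"] by simp

lemma C0_fstar: "f \<in> C0 X \<Longrightarrow> fstar f \<in> C0 X"
  unfolding fstar_def by (rule C0_compose[of f X cnj 1]) (auto intro: continuous_intros)

lemma C0_mult_cnj: "f \<in> C0 X \<Longrightarrow> (\<lambda>x. f x * cnj (f x)) \<in> C0 X"
  using C0_mult C0_fstar[unfolded fstar_def] by blast

lemma C0_zero: "(\<lambda>x. 0) \<in> C0 X"
  by (rule C0I) auto

lemma C0_sum:
  "finite I \<Longrightarrow> (\<And>i. i \<in> I \<Longrightarrow> f i \<in> C0 X) \<Longrightarrow> (\<lambda>x. \<Sum>i\<in>I. f i x) \<in> C0 X"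
  by (induction I rule: finite_induct) (auto intro: C0_zero C0_add)

lemma C0_bump:
  assumes lc: "locally_compact_space X" and hs: "Hausdorff_space X"
    and V: "openin X V" "y \<in> V"
  obtains f where "f \<in> C0 X" "f y = 1" "\<And>x. x \<notin> V \<Longrightarrow> f x = 0"
proof -
  have "regular_space X"
    using lc hs locally_compact_Hausdorff_imp_regular_space by blast
  then have "neighbourhood_base_of (\<lambda>C. compactin X C \<and> closedin X C) X"
    using lc locally_compact_regular_space_neighbourhood_base by blast
  then obtain U M where UM: "openin X U" "compactin X M" "y \<in> U" "U \<subseteq> M" "M \<subseteq> V"
    using V unfolding neighbourhood_base_of by metis
  have "completely_regular_space X"
    using lc hs locally_compact_regular_imp_completely_regular_space by blast
  moreover have y: "y \<in> topspace X" using UM openin_subset by blast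
  moreover have "closedin X (topspace X - U)" using UM by blast
  ultimately obtain r :: "'a \<Rightarrow> real"
    where r: "continuous_map X (top_of_set {0..1}) r" "r y = 0" "r ` (topspace X - U) \<subseteq> {1}"
    using UM unfolding completely_regular_space_def by (metis DiffD2 DiffI)
  define f where "f x = (if x \<in> topspace X then complex_of_real (1 - r x) else 0)" for x
  have f_outside_U: "f x = 0" if "x \<notin> U" for x
    using r(3) that by (auto simp: f_def)
  show ?thesis
  proof
    show "f y = 1" using y r(2) by (simp add: f_def)
    show "f x = 0" if "x \<notin> V" for x using f_outside_U that UM by blast
    show "f \<in> C0 X"
    proof (rule C0I)
      have "continuous_map X euclideanreal r"
        using r(1) continuous_map_in_subtopology by blast
      then have "continuous_map X euclidean (\<lambda>x. complex_of_real (1 - r x))"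
        by (intro continuous_map_compose_euclidean[of _ _ complex_of_real]
              continuous_map_diff continuous_intros) auto
      then show "continuous_map X euclidean f"
        by (rule continuous_map_eq) (simp add: f_def)
      show "\<exists>K. compactin X K \<and> {x \<in> topspace X. e \<le> cmod (f x)} \<subseteq> K" if "e > 0" for e :: real
        using UM f_outside_U that by (intro exI[of _ M]) force
    qed (simp add: f_def)
  qed
qed

lemma C0_nonvanishing_at:
  assumes "locally_compact_space X" "Hausdorff_space X" "x \<in> topspace X"
  shows "\<exists>a\<in>C0 X. a x \<noteq> 0"
  using C0_bump[OF assms(1,2) openin_topspace assms(3)] by (metis zero_neq_one)

lemma C0_separates_points:
  assumes lc: "locally_compact_space Y" and hs: "Hausdorff_space Y"
    and y: "y1 \<in> topspace Y" "y2 \<in> topspace Y" "y1 \<noteq> y2"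
  obtains f where "f \<in> C0 Y" "f y1 = 1" "f y2 = 0"
proof -
  have "closedin Y {y2}"
    using closedin_t1_singleton[OF Hausdorff_imp_t1_space[OF hs] y(2)] .
  then have "openin Y (topspace Y - {y2})" by (simp add: closedin_def)
  from C0_bump[OF lc hs this] y that show ?thesis by blast
qed

lemma topological_group_group: "topological_group G TG \<Longrightarrow> group G"
  by (simp add: topological_group_def)

lemma topological_group_topspace: "topological_group G TG \<Longrightarrow> topspace TG = carrier G"
  by (simp add: topological_group_def)

lemma right_action_in:
  "right_action G TG TY a \<Longrightarrow> y \<in> topspace TY \<Longrightarrow> g \<in> carrier G \<Longrightarrow> a y g \<in> topspace TY"
  by (simp add: right_action_def)

lemma right_action_inv_cancel:
  "right_action G TG TY a \<Longrightarrow> group G \<Longrightarrow> y \<in> topspace TY \<Longrightarrow> g \<in> carrier G \<Longrightarrow>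
    a (a y g) (inv\<^bsub>G\<^esub> g) = y"
  by (simp add: right_action_def group.r_inv group.inv_closed)

lemma continuous_map_right_action:
  assumes "right_action G TG TY a" "topspace TG = carrier G" "g \<in> carrier G"
  shows "continuous_map TY TY (\<lambda>y. a y g)"
proof -
  have "continuous_map TY (prod_topology TY TG) (\<lambda>y. (y, g))"
    using assms by (intro continuous_map_pairedI) auto
  moreover have "continuous_map (prod_topology TY TG) TY (\<lambda>(y, g). a y g)"
    using assms(1) by (simp add: right_action_def)
  ultimately show ?thesis
    using continuous_map_compose by (fastforce simp: o_def)
qed

lemma C0_transl:
  assumes ra: "right_action G TG TY a" and tg: "topological_group G TG"
    and g: "g \<in> carrier G" and f: "f \<in> C0 TY"
  shows "transl TY a g f \<in> C0 TY"
proof (rule C0I)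
  have grp: "group G" using tg by (rule topological_group_group)
  have ig: "inv\<^bsub>G\<^esub> g \<in> carrier G" using grp g by simp
  note cont = continuous_map_right_action[OF ra topological_group_topspace[OF tg]]
  show "continuous_map TY euclidean (transl TY a g f)"
    using continuous_map_compose[OF cont[OF g] continuous_map_C0[OF f]]
    by (rule continuous_map_eq) (simp add: transl_def)
  show "transl TY a g f x = 0" if "x \<notin> topspace TY" for x
    using that by (simp add: transl_def)
  fix e :: real assume "e > 0"
  let ?K = "(\<lambda>y. a y (inv\<^bsub>G\<^esub> g)) ` {x \<in> topspace TY. e \<le> norm (f x)}"
  have "compactin TY ?K"
    using image_compactin[OF compactin_C0_superlevel[OF f \<open>e > 0\<close>] cont[OF ig]] .
  moreover have "{x \<in> topspace TY. e \<le> norm (transl TY a g f x)} \<subseteq> ?K"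
  proof
    fix x assume "x \<in> {x \<in> topspace TY. e \<le> norm (transl TY a g f x)}"
    then have x: "x \<in> topspace TY" "e \<le> norm (f (a x g))" by (auto simp: transl_def)
    then have "a x g \<in> {x \<in> topspace TY. e \<le> norm (f x)}"
      using right_action_in[OF ra x(1) g] by simp
    moreover have "x = a (a x g) (inv\<^bsub>G\<^esub> g)"
      using right_action_inv_cancel[OF ra grp x(1) g] by simp
    ultimately show "x \<in> ?K" by blast
  qed
  ultimately show "\<exists>K. compactin TY K \<and> {x \<in> topspace TY. e \<le> norm (transl TY a g f x)} \<subseteq> K"
    by blast
qed

subsection \<open>Multipliers of C0(X) are multiplications by functions\<close>

definition C0_witness :: "('x \<Rightarrow> complex) set \<Rightarrow> 'x \<Rightarrow> ('x \<Rightarrow> complex)" where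
  "C0_witness A x = (SOME a. a \<in> A \<and> a x \<noteq> 0)"

definition multiplier_fun :: "('x \<Rightarrow> complex) set \<Rightarrow> 'x mult \<Rightarrow> 'x \<Rightarrow> complex" where
  "multiplier_fun A m x = snd m (C0_witness A x) x / C0_witness A x x"

lemma C0_witness:
  assumes "locally_compact_space X" "Hausdorff_space X" "x \<in> topspace X"
  shows "C0_witness (C0 X) x \<in> C0 X" "C0_witness (C0 X) x x \<noteq> 0"
  using someI_ex[OF C0_nonvanishing_at[OF assms, unfolded Bex_def]] by (auto simp: C0_witness_def)

lemma multiplier_apply:
  assumes lc: "locally_compact_space X" "Hausdorff_space X"
    and m: "m \<in> multipliers (C0 X)" and b: "b \<in> C0 X"
  shows "fst m b x = multiplier_fun (C0 X) m x * b x" "snd m b x = multiplier_fun (C0 X) m x * b x"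
proof -
  obtain L R where mLR: "m = (L, R)" by (cases m)
  have LA: "L \<in> C0 X \<rightarrow> C0 X" and RA: "R \<in> C0 X \<rightarrow> C0 X"
    and eq: "\<And>a b. a \<in> C0 X \<Longrightarrow> b \<in> C0 X \<Longrightarrow> a x * L b x = R a x * b x"
    using m by (auto simp: multipliers_def mLR fmul_def fun_eq_iff)
  let ?\<mu> = "multiplier_fun (C0 X) m x"
  have "L b x = ?\<mu> * b x \<and> R b x = ?\<mu> * b x"
  proof (cases "x \<in> topspace X")
    case False
    then show ?thesis using C0_outside b LA RA by (metis Pi_mem mult_zero_right)
  next
    case True
    let ?w = "C0_witness (C0 X) x"
    have w: "?w \<in> C0 X" "?w x \<noteq> 0" using C0_witness[OF lc True] by auto
    have Rw: "R ?w x = ?\<mu> * ?w x" using w(2) by (simp add: multiplier_fun_def mLR)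
    have "L b x * ?w x = (?\<mu> * b x) * ?w x" using eq[OF w(1) b] Rw by (simp add: algebra_simps)
    then have L: "L b x = ?\<mu> * b x" using w(2) by simp
    have "L ?w x = ?\<mu> * ?w x" using eq[OF w(1) w(1)] Rw w(2) by (simp add: field_simps)
    then have "R b x = ?\<mu> * b x" using eq[OF b w(1)] w(2) by (simp add: field_simps)
    with L show ?thesis by blast
  qed
  then show "fst m b x = ?\<mu> * b x" "snd m b x = ?\<mu> * b x" by (auto simp: mLR)
qed

definition pointwise_multiplier :: "'x topology \<Rightarrow> ('x \<Rightarrow> complex) \<Rightarrow> 'x mult" where
  "pointwise_multiplier X f = (restrict (fmul f) (C0 X), restrict (fmul f) (C0 X))"

lemma pointwise_multiplier_central:
  assumes lc: "locally_compact_space X" "Hausdorff_space X" and f: "f \<in> C0 X"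
  shows "pointwise_multiplier X f \<in> center_multipliers (C0 X)"
  unfolding center_multipliers_def
proof (intro CollectI conjI ballI)
  show "pointwise_multiplier X f \<in> multipliers (C0 X)"
    using f by (auto simp: pointwise_multiplier_def multipliers_def C0_mult fmul_def fun_eq_iff)
  fix n assume n: "n \<in> multipliers (C0 X)"
  have LA: "fst n \<in> C0 X \<rightarrow> C0 X" and RA: "snd n \<in> C0 X \<rightarrow> C0 X"
    using n by (auto simp: multipliers_def)
  have "fmul f (fst n b) = fst n (fmul f b)" "fmul f (snd n b) = snd n (fmul f b)"
    if b: "b \<in> C0 X" for b
    using multiplier_apply[OF lc n b] multiplier_apply[OF lc n C0_fmul[OF f b]]
    by (auto simp: fmul_def fun_eq_iff)
  then show "mmult (C0 X) (pointwise_multiplier X f) n = mmult (C0 X) n (pointwise_multiplier X f)"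
    unfolding mmult_def compose_def pointwise_multiplier_def
    using funcset_mem[OF LA] funcset_mem[OF RA] C0_fmul[OF f]
    by (auto intro!: restrict_ext)
qed

lemma C0_approx_by_multiple:
  assumes a: "a \<in> C0 X" and e: "e > 0"
  obtains b where "b \<in> C0 X" "\<And>x. norm (a x - b x * a x) < e"
proof
  define d where "d = e / 2"
  have d: "d > 0" "d < e" using e by (auto simp: d_def)
  define t where "t x = min 1 (norm (a x) / d)" for x
  show "(\<lambda>x. complex_of_real (t x)) \<in> C0 X" unfolding t_def
    by (rule C0_compose[OF a, of "\<lambda>z. complex_of_real (min 1 (norm z / d))" "1/d"])
       (use d in \<open>(intro continuous_intros | auto simp: abs_if min_def divide_nonneg_pos)+\<close>)
  fix x
  have t: "0 \<le> t x" "t x \<le> 1" using d by (auto simp: t_def)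
  have "a x - complex_of_real (t x) * a x = complex_of_real (1 - t x) * a x"
    by (simp add: algebra_simps)
  then have "norm (a x - complex_of_real (t x) * a x) = (1 - t x) * norm (a x)"
    using t by (simp only: norm_mult norm_of_real abs_of_nonneg diff_ge_0_iff_ge)
  also have "\<dots> < e"
  proof (cases "norm (a x) \<ge> d")
    case True then have "t x = 1" using d by (simp add: t_def)
    then show ?thesis using e by simp
  next
    case False
    then have "(1 - t x) * norm (a x) \<le> norm (a x)" using t by (simp add: mult_left_le_one_le)
    then show ?thesis using False d by linarith
  qed
  finally show "norm (a x - complex_of_real (t x) * a x) < e" .
qed

lemma G_C0_algebra_via_pointwise_multiplier:
  assumes lc: "locally_compact_space X" "Hausdorff_space X"
    and tg: "topological_group G TG" and ra: "right_action G TG X act"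
  shows "G_C0_algebra_via G X (transl X act) X act (pointwise_multiplier X)"
  unfolding G_C0_algebra_via_def Let_def
proof (intro conjI ballI allI impI)
  let ?A = "C0 X"
  fix f assume f: "f \<in> ?A"
  show "pointwise_multiplier X f \<in> center_multipliers ?A"
    using pointwise_multiplier_central[OF lc f] .
  show "pointwise_multiplier X (fstar f) = madj ?A (pointwise_multiplier X f)"
    by (auto simp: pointwise_multiplier_def madj_def fmul_def fstar_def C0_fstar[unfolded fstar_def]
        intro!: restrict_ext)
  fix h assume "h \<in> ?A"
  then show "pointwise_multiplier X (fmul f h) = mmult ?A (pointwise_multiplier X f) (pointwise_multiplier X h)"
    using f by (auto simp: pointwise_multiplier_def mmult_def compose_def fmul_def C0_mult algebra_simps
        intro!: restrict_ext)
  show "pointwise_multiplier X (\<lambda>y. f y + h y) = madd ?A (pointwise_multiplier X f) (pointwise_multiplier X h)"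
    by (auto simp: pointwise_multiplier_def madd_def fmul_def algebra_simps intro!: restrict_ext)
next
  fix c f
  show "pointwise_multiplier X (\<lambda>y. c * f y) = mscale (C0 X) c (pointwise_multiplier X f)"
    by (auto simp: pointwise_multiplier_def mscale_def fmul_def intro!: restrict_ext)
next
  fix g f assume g: "g \<in> carrier G"
  have grp: "group G" using tg by (rule topological_group_group)
  have "fmul (transl X act g f) a = transl X act g (fmul f (transl X act (inv\<^bsub>G\<^esub> g) a))"
    if a: "a \<in> C0 X" for a
    using right_action_in[OF ra _ g] right_action_inv_cancel[OF ra grp _ g] C0_outside[OF a]
    by (auto simp: transl_def fmul_def)
  then show "pointwise_multiplier X (transl X act g f) = mact G (C0 X) (transl X act) g (pointwise_multiplier X f)"
    using C0_transl[OF ra tg group.inv_closed[OF grp g]]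
    by (auto simp: pointwise_multiplier_def mact_def intro!: restrict_ext)
next
  fix a e assume "a \<in> C0 X" "(e::real) > 0"
  then obtain b where "b \<in> C0 X" "\<And>x. norm (a x - b x * a x) < e"
    using C0_approx_by_multiple by blast
  with \<open>a \<in> C0 X\<close> show "\<exists>(n::nat) fs bs. (\<forall>i<n. fs i \<in> C0 X \<and> bs i \<in> C0 X) \<and>
      (\<forall>x\<in>topspace X. cmod (a x - (\<Sum>i<n. fst (pointwise_multiplier X (fs i)) (bs i) x)) < e)"
    by (intro exI[of _ 1] exI[of _ "\<lambda>_. b"] exI[of _ "\<lambda>_. a"])
       (simp add: pointwise_multiplier_def fmul_def)
qed

subsection \<open>Characters of C0(Y) are point evaluations\<close>

lemma C0_complementary_square:
  assumes r: "r \<in> C0 Y" and r1: "\<And>y. norm (r y) \<le> 1"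
  obtains w where "w \<in> C0 Y"
    "\<And>y. w y * cnj (w y) = r y * cnj (r y) - (r y * cnj (r y)) * (r y * cnj (r y))"
proof
  define h where "h z = complex_of_real (norm z * sqrt (max 0 (1 - (norm z)\<^sup>2)))" for z :: complex
  show "(\<lambda>y. h (r y)) \<in> C0 Y"
  proof (rule C0_compose[OF r, of h 1])
    show "continuous_on UNIV h" unfolding h_def by (intro continuous_intros)
    have "sqrt (max 0 (1 - (norm z)\<^sup>2)) \<le> 1" for z :: complex
      by (simp add: real_sqrt_le_1_iff)
    then have "\<bar>norm z * sqrt (max 0 (1 - (norm z)\<^sup>2))\<bar> \<le> norm z" for z :: complex
      by (simp add: abs_mult mult_left_le)
    then show "norm (h z) \<le> 1 * norm z" for z
      by (simp only: h_def norm_of_real mult_1)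
  qed
  fix y
  define a where "a = norm (r y)"
  have "a\<^sup>2 \<le> 1" using r1[of y] by (simp add: a_def power_le_one)
  then have s: "(sqrt (max 0 (1 - a\<^sup>2)))\<^sup>2 = 1 - a\<^sup>2" by simp
  have "h (r y) * cnj (h (r y)) = complex_of_real ((a * sqrt (max 0 (1 - a\<^sup>2)))\<^sup>2)"
    by (simp add: h_def a_def power2_eq_square)
  also have "\<dots> = complex_of_real (a\<^sup>2 - a\<^sup>2 * a\<^sup>2)"
    using s by (simp add: power_mult_distrib algebra_simps)
  finally show "h (r y) * cnj (h (r y)) = r y * cnj (r y) - (r y * cnj (r y)) * (r y * cnj (r y))"
    by (simp add: a_def flip: complex_norm_square)
qed

lemma compactin_finite_nonvanishing:
  assumes C: "compactin Y C" and k: "\<And>y. y \<in> C \<Longrightarrow> k y \<in> C0 Y \<and> k y y \<noteq> 0"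
  obtains T where "finite T" "T \<subseteq> C" "\<And>y. y \<in> C \<Longrightarrow> \<exists>t\<in>T. k t y \<noteq> 0"
proof -
  define N where "N t = {z \<in> topspace Y. k t z \<in> - {0}}" for t
  have "openin Y (N t)" if "t \<in> C" for t
    unfolding N_def using k[OF that]
    by (intro openin_continuous_map_preimage[OF continuous_map_C0]) auto
  moreover have "C \<subseteq> \<Union>(N ` C)"
    using k compactin_subset_topspace[OF C] by (fastforce simp: N_def)
  ultimately obtain F where "finite F" "F \<subseteq> N ` C" "C \<subseteq> \<Union>F"
    using C unfolding compactin_def by (metis (no_types, lifting) imageE)
  then obtain T where "T \<subseteq> C" "finite T" "C \<subseteq> \<Union>(N ` T)"
    by (metis finite_subset_image)
  then show ?thesis using that by (fastforce simp: N_def)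
qed

lemma C0_divide_out_on_compact:
  assumes g: "g \<in> C0 Y" and S: "continuous_map Y euclideanreal S" "\<And>y. 0 \<le> S y"
    and C: "compactin Y C" "\<And>y. y \<in> C \<Longrightarrow> 0 < S y"
    and small: "\<And>y. y \<in> topspace Y - C \<Longrightarrow> norm (g y) \<le> \<epsilon>" and "0 \<le> \<epsilon>"
  obtains u where "u \<in> C0 Y" "\<And>y. norm (g y - complex_of_real (S y) * u y) \<le> \<epsilon>"
proof (cases "C = {}")
  case True
  then have "norm (g y - complex_of_real (S y) * 0) \<le> \<epsilon>" for y
    using small C0_outside[OF g] \<open>0 \<le> \<epsilon>\<close> by (cases "y \<in> topspace Y") auto
  then show ?thesis using that C0_zero by blast
next
  case False
  have "compact (S ` C)"
    using image_compactin[OF C(1) S(1)] by (simp add: compactin_euclidean_iff)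
  then obtain m where m: "m \<in> S ` C" "\<And>z. z \<in> S ` C \<Longrightarrow> m \<le> z"
    using compact_attains_inf[of "S ` C"] False by blast
  have "0 < m" using m(1) C(2) by blast
  define t where "t y = complex_of_real (1 / max (S y) m)" for y
  have "continuous_map Y euclidean t" unfolding t_def
    using \<open>0 < m\<close> by (intro continuous_map_compose_euclidean[of _ _ complex_of_real]
        continuous_map_real_divide continuous_map_real_max S(1) continuous_intros) auto
  moreover have "norm (t y) \<le> 1 / m" for y
    using \<open>0 < m\<close> by (simp only: t_def norm_of_real) (simp add: frac_le)
  ultimately have u: "(\<lambda>y. t y * g y) \<in> C0 Y" by (rule C0_bounded_mult[OF g])
  have "norm (g y - complex_of_real (S y) * (t y * g y)) \<le> \<epsilon>" for y
  proof -
    have eq: "g y - complex_of_real (S y) * (t y * g y) = complex_of_real (1 - S y / max (S y) m) * g y"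
      by (simp add: t_def algebra_simps)
    show ?thesis
    proof (cases "y \<in> C")
      case True
      then have "m \<le> S y" "0 < S y" using m(2) C(2) by auto
      then have "S y / max (S y) m = 1" by simp
      then show ?thesis unfolding eq using \<open>0 \<le> \<epsilon>\<close> by simp
    next
      case False
      have "norm (g y) \<le> \<epsilon>"
        using small[of y] False C0_outside[OF g, of y] \<open>0 \<le> \<epsilon>\<close> by (cases "y \<in> topspace Y") auto
      moreover have "\<bar>1 - S y / max (S y) m\<bar> \<le> 1"
        using S(2)[of y] \<open>0 < m\<close> by (simp add: divide_le_eq_1 less_max_iff_disj)
      ultimately show ?thesis
        unfolding eq norm_mult norm_of_real
        using mult_left_le_one_le[OF norm_ge_zero abs_ge_zero] by (meson order_trans)
    qed
  qed
  with u that show ?thesis by blast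
qed

locale C0_character =
  fixes Y :: "'y topology" and \<phi> :: "('y \<Rightarrow> complex) \<Rightarrow> complex"
  assumes lc: "locally_compact_space Y" and hs: "Hausdorff_space Y"
    and add: "\<And>f g. f \<in> C0 Y \<Longrightarrow> g \<in> C0 Y \<Longrightarrow> \<phi> (\<lambda>y. f y + g y) = \<phi> f + \<phi> g"
    and scale: "\<And>c f. f \<in> C0 Y \<Longrightarrow> \<phi> (\<lambda>y. c * f y) = c * \<phi> f"
    and mult: "\<And>f g. f \<in> C0 Y \<Longrightarrow> g \<in> C0 Y \<Longrightarrow> \<phi> (fmul f g) = \<phi> f * \<phi> g"
    and star: "\<And>f. f \<in> C0 Y \<Longrightarrow> \<phi> (fstar f) = cnj (\<phi> f)"
begin

lemma mult_pointwise: "f \<in> C0 Y \<Longrightarrow> g \<in> C0 Y \<Longrightarrow> \<phi> (\<lambda>y. f y * g y) = \<phi> f * \<phi> g"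
  using mult by (simp add: fmul_def)

lemma diff: "f \<in> C0 Y \<Longrightarrow> g \<in> C0 Y \<Longrightarrow> \<phi> (\<lambda>y. f y - g y) = \<phi> f - \<phi> g"
  using add[of f "\<lambda>y. (-1) * g y"] scale[of g "-1"] C0_scale[of g Y "-1"] by simp

lemma sum: "finite I \<Longrightarrow> (\<And>i. i \<in> I \<Longrightarrow> f i \<in> C0 Y) \<Longrightarrow> \<phi> (\<lambda>y. \<Sum>i\<in>I. f i y) = (\<Sum>i\<in>I. \<phi> (f i))"
proof (induction I rule: finite_induct)
  case empty then show ?case using scale[OF C0_zero, of 0] by simp
next
  case (insert i I)
  then show ?case using add[OF _ C0_sum, of "f i" I f] by simp
qed

lemma mult_cnj: "f \<in> C0 Y \<Longrightarrow> \<phi> (\<lambda>y. f y * cnj (f y)) = complex_of_real ((norm (\<phi> f))\<^sup>2)"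
proof -
  assume f: "f \<in> C0 Y"
  have "\<phi> (\<lambda>y. f y * cnj (f y)) = \<phi> f * cnj (\<phi> f)"
    using mult[OF f C0_fstar[OF f]] star[OF f] by (simp add: fmul_def fstar_def)
  then show ?thesis by (simp only: complex_norm_square)
qed

text \<open>With q = |r|^2 one has phi q = |phi r|^2 and phi q - (phi q)^2 = |phi w|^2 \<ge> 0 for the
  w of C0_complementary_square.\<close>
lemma norm_le_one:
  assumes r: "r \<in> C0 Y" and r1: "\<And>y. norm (r y) \<le> 1"
  shows "norm (\<phi> r) \<le> 1"
proof -
  define q where "q y = r y * cnj (r y)" for y
  have q: "q \<in> C0 Y" unfolding q_def using C0_mult_cnj[OF r] .
  define t where "t = (norm (\<phi> r))\<^sup>2"
  have \<phi>q: "\<phi> q = complex_of_real t" unfolding q_def t_def using mult_cnj[OF r] .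
  obtain w where w: "w \<in> C0 Y" "\<And>y. w y * cnj (w y) = q y - q y * q y"
    using C0_complementary_square[OF r r1] unfolding q_def by blast
  have "complex_of_real ((norm (\<phi> w))\<^sup>2) = \<phi> (\<lambda>y. q y - q y * q y)"
    using mult_cnj[OF w(1)] w(2) by simp
  also have "\<dots> = complex_of_real (t - t * t)"
    using diff[OF q C0_mult[OF q q]] mult_pointwise[OF q q] \<phi>q by simp
  finally have "0 \<le> t * (1 - t)"
    by (metis of_real_eq_iff zero_le_power2 right_diff_distrib mult_1_right)
  moreover have "0 \<le> t" by (simp add: t_def)
  ultimately have "t \<le> 1"
    by (smt (verit) mult_pos_neg)
  then show ?thesis unfolding t_def by (simp add: power_le_one_iff)
qed

lemma norm_le:
  assumes r: "r \<in> C0 Y" and c: "c > 0" and rc: "\<And>y. norm (r y) \<le> c"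
  shows "norm (\<phi> r) \<le> c"
proof -
  let ?r' = "\<lambda>y. (1 / c) * r y"
  have "norm (\<phi> ?r') \<le> 1"
    using c rc by (intro norm_le_one C0_scale r) (simp add: norm_divide divide_le_eq_1)
  moreover have "\<phi> r = c * \<phi> ?r'"
    using scale[OF C0_scale[OF r], of c "1 / c"] c by simp
  ultimately show ?thesis
    using c by (simp add: norm_mult mult_left_le)
qed

lemma normalised:
  assumes "f \<in> C0 Y" "\<phi> f \<noteq> 0"
  obtains g where "g \<in> C0 Y" "\<phi> g = 1"
  using C0_scale[OF assms(1), of "1 / \<phi> f"] scale[OF assms(1), of "1 / \<phi> f"] assms(2) that
  by simp

lemma sum_squares_in_kernel:
  assumes T: "finite T" and k: "\<And>t. t \<in> T \<Longrightarrow> k t \<in> C0 Y" "\<And>t. t \<in> T \<Longrightarrow> \<phi> (k t) = 0"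
  shows "(\<lambda>y. complex_of_real (\<Sum>t\<in>T. (norm (k t y))\<^sup>2)) \<in> C0 Y"
    and "\<phi> (\<lambda>y. complex_of_real (\<Sum>t\<in>T. (norm (k t y))\<^sup>2)) = 0"
proof -
  have eq: "(\<lambda>y. complex_of_real (\<Sum>t\<in>T. (norm (k t y))\<^sup>2)) = (\<lambda>y. \<Sum>t\<in>T. k t y * cnj (k t y))"
    unfolding of_real_sum by (simp only: complex_norm_square)
  show "(\<lambda>y. complex_of_real (\<Sum>t\<in>T. (norm (k t y))\<^sup>2)) \<in> C0 Y"
    unfolding eq using k(1) by (intro C0_sum[OF T] C0_mult_cnj)
  show "\<phi> (\<lambda>y. complex_of_real (\<Sum>t\<in>T. (norm (k t y))\<^sup>2)) = 0"
    unfolding eq using sum[OF T, of "\<lambda>t y. k t y * cnj (k t y)"] C0_mult_cnj[OF k(1)] k(2)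
      mult_cnj[OF k(1)] by simp
qed

text \<open>If the kernel had no common zero, compactness would give finitely many kernel elements
  whose squared moduli add up to an s in the kernel that is positive where |g| \<ge> 1/2, for g
  with phi g = 1; dividing s out of g leaves r with phi r = 1 and sup norm at most 1/2.\<close>
lemma common_zero_of_kernel:
  assumes f0: "f0 \<in> C0 Y" "\<phi> f0 \<noteq> 0"
  shows "\<exists>y\<in>topspace Y. \<forall>k\<in>C0 Y. \<phi> k = 0 \<longrightarrow> k y = 0"
proof (rule ccontr)
  assume "\<not> ?thesis"
  then obtain k where k: "\<And>y. y \<in> topspace Y \<Longrightarrow> k y \<in> C0 Y \<and> \<phi> (k y) = 0 \<and> k y y \<noteq> 0"
    by metis
  obtain g where g: "g \<in> C0 Y" and \<phi>g: "\<phi> g = 1" using normalised[OF f0] .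
  define C where "C = {y \<in> topspace Y. 1/2 \<le> norm (g y)}"
  have C: "compactin Y C" unfolding C_def using compactin_C0_superlevel[OF g, of "1/2"] by simp
  obtain T where T: "finite T" "T \<subseteq> C" "\<And>y. y \<in> C \<Longrightarrow> \<exists>t\<in>T. k t y \<noteq> 0"
    using compactin_finite_nonvanishing[OF C, of k] k C_def by blast
  have kT: "k t \<in> C0 Y" "\<phi> (k t) = 0" if "t \<in> T" for t
    using k T(2) that C_def by auto
  define S where "S y = (\<Sum>t\<in>T. (norm (k t y))\<^sup>2)" for y
  have s: "(\<lambda>y. complex_of_real (S y)) \<in> C0 Y" "\<phi> (\<lambda>y. complex_of_real (S y)) = 0"
    unfolding S_def using sum_squares_in_kernel[where k = k, OF T(1) kT] by auto
  have S_pos: "S y > 0" if y: "y \<in> C" for y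
  proof -
    obtain t where t: "t \<in> T" "k t y \<noteq> 0" using T(3)[OF y] by blast
    then have "0 < (norm (k t y))\<^sup>2" by simp
    also have "\<dots> \<le> S y" unfolding S_def by (rule member_le_sum[OF t(1)]) (auto simp: T(1))
    finally show ?thesis .
  qed
  have "continuous_map Y euclideanreal S"
    unfolding S_def using kT T(1) by (intro continuous_map_sum continuous_intros continuous_map_C0) auto
  moreover have "0 \<le> S y" for y unfolding S_def by (simp add: sum_nonneg)
  moreover have "norm (g y) \<le> 1/2" if "y \<in> topspace Y - C" for y
    using that by (auto simp: C_def)
  ultimately obtain u where u: "u \<in> C0 Y" "\<And>y. norm (g y - complex_of_real (S y) * u y) \<le> 1/2"
    using C0_divide_out_on_compact[where S = S and \<epsilon> = "1/2", OF g _ _ C S_pos] by auto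
  let ?r = "\<lambda>y. g y - complex_of_real (S y) * u y"
  have "?r \<in> C0 Y"
    using C0_add[OF g C0_scale[OF C0_mult[OF s(1) u(1)], of "-1"]] by simp
  then have "norm (\<phi> ?r) \<le> 1/2" by (rule norm_le) (use u(2) in auto)
  moreover have "\<phi> ?r = 1"
    using diff[OF g C0_mult[OF s(1) u(1)]] mult_pointwise[OF s(1) u(1)] s(2) \<phi>g by simp
  ultimately show False by simp
qed

lemma eq_eval:
  assumes f0: "f0 \<in> C0 Y" "\<phi> f0 \<noteq> 0"
  shows "\<exists>y\<in>topspace Y. \<forall>f\<in>C0 Y. \<phi> f = f y"
proof -
  obtain y where y: "y \<in> topspace Y" "\<And>k. k \<in> C0 Y \<Longrightarrow> \<phi> k = 0 \<Longrightarrow> k y = 0"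
    using common_zero_of_kernel[OF f0] by blast
  obtain g where g: "g \<in> C0 Y" and \<phi>g: "\<phi> g = 1" using normalised[OF f0] .
  have eval: "f y = \<phi> f * g y" if f: "f \<in> C0 Y" for f
  proof -
    have "(\<lambda>z. f z - \<phi> f * g z) \<in> C0 Y"
      using C0_add[OF f C0_scale[OF g, of "- \<phi> f"]] by simp
    moreover have "\<phi> (\<lambda>z. f z - \<phi> f * g z) = 0"
      using diff[OF f C0_scale[OF g]] scale[OF g] \<phi>g by simp
    ultimately show ?thesis using y(2) by fastforce
  qed
  have "g y * g y = g y"
    using eval[OF C0_mult[OF g g]] mult_pointwise[OF g g] \<phi>g by simp
  moreover obtain b where "b \<in> C0 Y" "b y = 1"
    using C0_bump[OF lc hs openin_topspace y(1)] by blast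
  then have "g y \<noteq> 0" using eval by force
  ultimately have "g y = 1" by simp
  then show ?thesis using eval y(1) by auto
qed

end

subsection \<open>Pulling back principal bundles along equivariant maps\<close>

locale equivariant_map =
  fixes G :: "('g, 'm) monoid_scheme" and TG :: "'g topology"
    and TX :: "'x topology" and act :: "'x \<Rightarrow> 'g \<Rightarrow> 'x"
    and TY :: "'y topology" and actY :: "'y \<Rightarrow> 'g \<Rightarrow> 'y"
    and p :: "'x \<Rightarrow> 'y"
  assumes raX: "right_action G TG TX act"
    and cont: "continuous_map TX TY p"
    and equivariant: "\<And>x g. x \<in> topspace TX \<Longrightarrow> g \<in> carrier G \<Longrightarrow> p (act x g) = actY (p x) g"
begin

definition pullback :: "'y set \<Rightarrow> 'x set" where
  "pullback U = {x \<in> topspace TX. p x \<in> U}"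

lemma in_topspace: "x \<in> topspace TX \<Longrightarrow> p x \<in> topspace TY"
  using cont by (simp add: continuous_map_def Pi_iff)

lemma openin_pullback: "openin TY U \<Longrightarrow> openin TX (pullback U)"
  unfolding pullback_def by (rule openin_continuous_map_preimage[OF cont])

lemma invariant_set_pullback: "invariant_set G actY U \<Longrightarrow> invariant_set G act (pullback U)"
  unfolding invariant_set_def pullback_def using right_action_in[OF raX] equivariant by auto

lemma principal_cover_pullback:
  assumes "principal_cover G TG TY actY \<U>"
  shows "principal_cover G TG TX act (pullback ` \<U>)"
  unfolding principal_cover_def
proof (intro conjI ballI)
  have "\<Union>\<U> = topspace TY" using assms by (simp add: principal_cover_def)
  then show "\<Union> (pullback ` \<U>) = topspace TX"
    using in_topspace by (auto simp: pullback_def)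
  fix W assume "W \<in> pullback ` \<U>"
  then obtain U where U: "U \<in> \<U>" "W = pullback U" by blast
  then have "openin TY U \<and> invariant_set G actY U \<and> (\<exists>\<psi>. continuous_map (subtopology TY U) TG \<psi> \<and>
      (\<forall>y\<in>U. \<forall>g\<in>carrier G. \<psi> (actY y g) = \<psi> y \<otimes>\<^bsub>G\<^esub> g))"
    using assms unfolding principal_cover_def by (elim conjE) (rule bspec)
  then obtain \<psi> where U_props: "openin TY U" "invariant_set G actY U"
      "continuous_map (subtopology TY U) TG \<psi>"
      "\<And>y g. y \<in> U \<Longrightarrow> g \<in> carrier G \<Longrightarrow> \<psi> (actY y g) = \<psi> y \<otimes>\<^bsub>G\<^esub> g"
    by blast
  show "openin TX W" using openin_pullback[OF U_props(1)] U(2) by simp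
  show "invariant_set G act W" using invariant_set_pullback[OF U_props(2)] U(2) by simp
  have "continuous_map (subtopology TX W) (subtopology TY U) p"
    unfolding continuous_map_in_subtopology U(2)
    using continuous_map_from_subtopology[OF cont] by (auto simp: pullback_def)
  then have "continuous_map (subtopology TX W) TG (\<psi> \<circ> p)"
    using U_props(3) by (rule continuous_map_compose)
  moreover have "(\<psi> \<circ> p) (act x g) = (\<psi> \<circ> p) x \<otimes>\<^bsub>G\<^esub> g" if "x \<in> W" "g \<in> carrier G" for x g
    using that U(2) equivariant U_props(4) by (simp add: pullback_def)
  ultimately show "\<exists>\<psi>. continuous_map (subtopology TX W) TG \<psi> \<and>
      (\<forall>x\<in>W. \<forall>g\<in>carrier G. \<psi> (act x g) = \<psi> x \<otimes>\<^bsub>G\<^esub> g)"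
    by blast
qed

lemma principal_bundle_pullback:
  "principal_bundle G TG TY actY \<Longrightarrow> principal_bundle G TG TX act"
  unfolding principal_bundle_def using principal_cover_pullback by blast

end

locale numerable_pullback = equivariant_map G TG TX act TY actY p
  for G :: "('g, 'm) monoid_scheme" and TG :: "'g topology"
    and TX :: "'x topology" and act :: "'x \<Rightarrow> 'g \<Rightarrow> 'x"
    and TY :: "'y topology" and actY :: "'y \<Rightarrow> 'g \<Rightarrow> 'y"
    and p :: "'x \<Rightarrow> 'y" +
  fixes \<U> :: "'y set set" and \<rho> :: "'y set \<Rightarrow> 'y \<Rightarrow> real"
  assumes cover: "principal_cover G TG TY actY \<U>"
    and partition: "\<forall>U\<in>\<U>. continuous_map TY euclideanreal (\<rho> U) \<and>
           (\<forall>y\<in>topspace TY. \<forall>g\<in>carrier G. \<rho> U (actY y g) = \<rho> U y) \<and>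
           (\<forall>y\<in>topspace TY. 0 \<le> \<rho> U y) \<and>
           TY closure_of {y \<in> topspace TY. \<rho> U y \<noteq> 0} \<subseteq> U"
    and locally_finite: "\<forall>y\<in>topspace TY. \<exists>W. openin TY W \<and> invariant_set G actY W \<and> y \<in> W \<and>
           finite {U\<in>\<U>. W \<inter> (TY closure_of {z \<in> topspace TY. \<rho> U z \<noteq> 0}) \<noteq> {}}"
    and sum_one: "\<forall>y\<in>topspace TY. (\<Sum>U\<in>{U\<in>\<U>. \<rho> U y \<noteq> 0}. \<rho> U y) = 1"
begin

definition support :: "'y set \<Rightarrow> 'y set" where
  "support U = TY closure_of {y \<in> topspace TY. \<rho> U y \<noteq> 0}"

definition meeting :: "'y set \<Rightarrow> 'y set set" where
  "meeting W = {U\<in>\<U>. W \<inter> support U \<noteq> {}}"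

text \<open>Distinct members of the cover may have the same preimage, so the pulled back
  partition of unity sums over all of them.\<close>
definition pulled :: "'x set \<Rightarrow> 'x \<Rightarrow> real" where
  "pulled V x = (\<Sum>U\<in>{U\<in>\<U>. pullback U = V \<and> \<rho> U (p x) \<noteq> 0}. \<rho> U (p x))"

lemma \<rho>_cont: "U \<in> \<U> \<Longrightarrow> continuous_map TY euclideanreal (\<rho> U)"
  and \<rho>_invariant: "U \<in> \<U> \<Longrightarrow> y \<in> topspace TY \<Longrightarrow> g \<in> carrier G \<Longrightarrow> \<rho> U (actY y g) = \<rho> U y"
  and \<rho>_nonneg: "U \<in> \<U> \<Longrightarrow> y \<in> topspace TY \<Longrightarrow> 0 \<le> \<rho> U y"
  and \<rho>_support: "U \<in> \<U> \<Longrightarrow> support U \<subseteq> U"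
  using partition by (auto simp: support_def)

lemma in_support: "y \<in> topspace TY \<Longrightarrow> \<rho> U y \<noteq> 0 \<Longrightarrow> y \<in> support U"
  unfolding support_def by (rule subsetD[OF closure_of_subset]) auto

lemma finite_meeting:
  "y \<in> topspace TY \<Longrightarrow> \<exists>W. openin TY W \<and> invariant_set G actY W \<and> y \<in> W \<and> finite (meeting W)"
  using locally_finite unfolding meeting_def support_def by blast

lemma pulled_local:
  assumes fin: "finite (meeting W)" and z: "z \<in> topspace TX" "p z \<in> W"
  shows "pulled V z = (\<Sum>U\<in>{U\<in>meeting W. pullback U = V}. \<rho> U (p z))"
  unfolding pulled_def
proof (rule sum.mono_neutral_left)
  show "finite {U\<in>meeting W. pullback U = V}" using fin by simp
  show "{U\<in>\<U>. pullback U = V \<and> \<rho> U (p z) \<noteq> 0} \<subseteq> {U\<in>meeting W. pullback U = V}"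
    using in_support[OF in_topspace[OF z(1)]] z(2) by (auto simp: meeting_def)
qed (auto simp: meeting_def)

lemma continuous_map_pulled: "continuous_map TX euclideanreal (pulled V)"
proof (rule continuous_map_locally_eq)
  fix x assume x: "x \<in> topspace TX"
  obtain W where W: "openin TY W" "p x \<in> W" "finite (meeting W)"
    using finite_meeting[OF in_topspace[OF x]] by blast
  have "finite {U\<in>meeting W. pullback U = V}" using W(3) by simp
  then have "continuous_map TX euclideanreal (\<lambda>z. \<Sum>U\<in>{U\<in>meeting W. pullback U = V}. \<rho> U (p z))"
    using continuous_map_compose[OF cont \<rho>_cont]
    by (intro continuous_map_sum) (auto simp: meeting_def o_def)
  moreover have "pulled V z = (\<Sum>U\<in>{U\<in>meeting W. pullback U = V}. \<rho> U (p z))" if "z \<in> pullback W" for z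
    using that pulled_local[OF W(3)] by (simp add: pullback_def)
  ultimately show "\<exists>N g. openin TX N \<and> x \<in> N \<and> continuous_map TX euclideanreal g \<and> (\<forall>z\<in>N. pulled V z = g z)"
    using openin_pullback[OF W(1)] x W(2) by (force simp: pullback_def)
qed

lemma support_pulled:
  assumes z: "z \<in> TX closure_of {x \<in> topspace TX. pulled V x \<noteq> 0}"
  shows "\<exists>U\<in>\<U>. pullback U = V \<and> p z \<in> support U"
proof (rule ccontr)
  assume nc: "\<not> ?thesis"
  have zt: "z \<in> topspace TX" using closure_of_subset_topspace z by fastforce
  obtain W where W: "openin TY W" "p z \<in> W" "finite (meeting W)"
    using finite_meeting[OF in_topspace[OF zt]] by blast
  define F where "F = {U\<in>meeting W. pullback U = V}"
  have "closedin TY (\<Union>(support ` F))"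
    using W(3) by (intro closedin_Union) (auto simp: support_def F_def)
  then have "openin TX (pullback (W - \<Union>(support ` F)))"
    using W(1) by (intro openin_pullback openin_diff)
  moreover have "z \<in> pullback (W - \<Union>(support ` F))"
    using zt W(2) nc by (auto simp: pullback_def F_def meeting_def)
  ultimately obtain z' where z': "z' \<in> topspace TX" "pulled V z' \<noteq> 0" "z' \<in> pullback (W - \<Union>(support ` F))"
    using z unfolding in_closure_of by blast
  then have "\<rho> U (p z') = 0" if "U \<in> F" for U
    using that in_support[OF in_topspace[OF z'(1)]] by (auto simp: pullback_def)
  then have "pulled V z' = 0"
    using pulled_local[OF W(3) z'(1)] z'(3) by (simp add: pullback_def F_def)
  with z'(2) show False by contradiction
qed

lemma pulled_invariant:
  assumes "x \<in> topspace TX" "g \<in> carrier G"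
  shows "pulled V (act x g) = pulled V x"
  unfolding pulled_def equivariant[OF assms]
  using \<rho>_invariant[OF _ in_topspace[OF assms(1)] assms(2)] by (intro sum.cong) auto

lemma pulled_nonneg: "x \<in> topspace TX \<Longrightarrow> 0 \<le> pulled V x"
  unfolding pulled_def using \<rho>_nonneg in_topspace by (intro sum_nonneg) auto

lemma closure_support_pulled: "TX closure_of {x \<in> topspace TX. pulled V x \<noteq> 0} \<subseteq> V"
proof
  fix z assume z: "z \<in> TX closure_of {x \<in> topspace TX. pulled V x \<noteq> 0}"
  then obtain U where U: "U \<in> \<U>" "pullback U = V" "p z \<in> support U"
    using support_pulled by blast
  moreover have "z \<in> topspace TX" using closure_of_subset_topspace z by fastforce
  ultimately show "z \<in> V" using \<rho>_support by (auto simp: pullback_def)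
qed

lemma pulled_locally_finite:
  assumes x: "x \<in> topspace TX"
  shows "\<exists>W. openin TX W \<and> invariant_set G act W \<and> x \<in> W \<and>
    finite {V \<in> pullback ` \<U>. W \<inter> TX closure_of {z \<in> topspace TX. pulled V z \<noteq> 0} \<noteq> {}}"
proof -
  obtain W where W: "openin TY W" "invariant_set G actY W" "p x \<in> W" "finite (meeting W)"
    using finite_meeting[OF in_topspace[OF x]] by blast
  have "{V \<in> pullback ` \<U>. pullback W \<inter> TX closure_of {z \<in> topspace TX. pulled V z \<noteq> 0} \<noteq> {}}
      \<subseteq> pullback ` meeting W"
  proof
    fix V assume "V \<in> {V \<in> pullback ` \<U>. pullback W \<inter> TX closure_of {z \<in> topspace TX. pulled V z \<noteq> 0} \<noteq> {}}"
    then obtain z where z: "z \<in> pullback W" "z \<in> TX closure_of {z \<in> topspace TX. pulled V z \<noteq> 0}"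
      by blast
    obtain U where "U \<in> \<U>" "pullback U = V" "p z \<in> support U"
      using support_pulled[OF z(2)] by blast
    with z(1) show "V \<in> pullback ` meeting W" by (auto simp: meeting_def pullback_def)
  qed
  then have "finite {V \<in> pullback ` \<U>. pullback W \<inter> TX closure_of {z \<in> topspace TX. pulled V z \<noteq> 0} \<noteq> {}}"
    using W(4) finite_subset by blast
  moreover have "x \<in> pullback W" using x W(3) by (simp add: pullback_def)
  ultimately show ?thesis
    using openin_pullback[OF W(1)] invariant_set_pullback[OF W(2)] by blast
qed

lemma pulled_sum:
  assumes x: "x \<in> topspace TX"
  shows "(\<Sum>V\<in>{V \<in> pullback ` \<U>. pulled V x \<noteq> 0}. pulled V x) = 1"
proof -
  define I where "I = {U\<in>\<U>. \<rho> U (p x) \<noteq> 0}"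
  obtain W where W: "p x \<in> W" "finite (meeting W)"
    using finite_meeting[OF in_topspace[OF x]] by blast
  then have "I \<subseteq> meeting W"
    using in_support[OF in_topspace[OF x]] by (auto simp: I_def meeting_def)
  then have fin: "finite I" using W(2) finite_subset by blast
  have pulled_I: "pulled V x = (\<Sum>U\<in>{U\<in>I. pullback U = V}. \<rho> U (p x))" for V
    unfolding pulled_def I_def by (rule sum.cong) auto
  have "(\<Sum>V\<in>{V \<in> pullback ` \<U>. pulled V x \<noteq> 0}. pulled V x) = (\<Sum>V\<in>pullback ` I. pulled V x)"
  proof (rule sum.mono_neutral_left)
    show "{V \<in> pullback ` \<U>. pulled V x \<noteq> 0} \<subseteq> pullback ` I"
    proof
      fix V assume "V \<in> {V \<in> pullback ` \<U>. pulled V x \<noteq> 0}"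
      then have "{U\<in>I. pullback U = V} \<noteq> {}" using pulled_I[of V] by force
      then show "V \<in> pullback ` I" by blast
    qed
  qed (use fin in \<open>auto simp: I_def\<close>)
  also have "\<dots> = (\<Sum>V\<in>pullback ` I. \<Sum>U\<in>{U\<in>I. pullback U = V}. \<rho> U (p x))"
    using pulled_I by simp
  also have "\<dots> = (\<Sum>U\<in>I. \<rho> U (p x))"
    by (rule sum.group[OF fin]) (use fin in auto)
  also have "\<dots> = 1" unfolding I_def using sum_one in_topspace[OF x] by blast
  finally show ?thesis .
qed

lemma numerable_principal_bundle: "numerable_principal_bundle G TG TX act"
  unfolding numerable_principal_bundle_def
  by (intro exI[of _ "pullback ` \<U>"] exI[of _ pulled] conjI ballI principal_cover_pullback[OF cover]
      continuous_map_pulled pulled_invariant pulled_nonneg closure_support_pulled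
      pulled_locally_finite pulled_sum)

end

lemma (in equivariant_map) numerable_principal_bundle_pullback:
  assumes "numerable_principal_bundle G TG TY actY"
  shows "numerable_principal_bundle G TG TX act"
proof -
  obtain \<U> \<rho> where "numerable_pullback_axioms G TG TY actY \<U> \<rho>"
    using assms unfolding numerable_principal_bundle_def numerable_pullback_axioms_def by blast
  then interpret numerable_pullback G TG TX act TY actY p \<U> \<rho>
    by (intro numerable_pullback.intro equivariant_map_axioms)
  show ?thesis by (rule numerable_principal_bundle)
qed

subsection \<open>The structure map of a G-C0(Y)-algebra C0(X)\<close>

locale G_C0_algebra_over =
  fixes G :: "('g, 'm) monoid_scheme" and TG :: "'g topology"
    and TX :: "'x topology" and act :: "'x \<Rightarrow> 'g \<Rightarrow> 'x"
    and TY :: "'y topology" and actY :: "'y \<Rightarrow> 'g \<Rightarrow> 'y"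
    and chi :: "('y \<Rightarrow> complex) \<Rightarrow> 'x mult"
  assumes tg: "topological_group G TG"
    and lcX: "locally_compact_space TX" and hsX: "Hausdorff_space TX"
    and lcY: "locally_compact_space TY" and hsY: "Hausdorff_space TY"
    and raX: "right_action G TG TX act" and raY: "right_action G TG TY actY"
    and via: "G_C0_algebra_via G TX (transl TX act) TY actY chi"
begin

lemma chi_multiplier: "f \<in> C0 TY \<Longrightarrow> chi f \<in> multipliers (C0 TX)"
  using via unfolding G_C0_algebra_via_def Let_def center_multipliers_def by blast

lemma chi_add: "f \<in> C0 TY \<Longrightarrow> h \<in> C0 TY \<Longrightarrow> chi (\<lambda>y. f y + h y) = madd (C0 TX) (chi f) (chi h)"
  using via unfolding G_C0_algebra_via_def Let_def by blast

lemma chi_scale: "f \<in> C0 TY \<Longrightarrow> chi (\<lambda>y. c * f y) = mscale (C0 TX) c (chi f)"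
  using via unfolding G_C0_algebra_via_def Let_def by blast

lemma chi_mult: "f \<in> C0 TY \<Longrightarrow> h \<in> C0 TY \<Longrightarrow> chi (fmul f h) = mmult (C0 TX) (chi f) (chi h)"
  using via unfolding G_C0_algebra_via_def Let_def by blast

lemma chi_star: "f \<in> C0 TY \<Longrightarrow> chi (fstar f) = madj (C0 TX) (chi f)"
  using via unfolding G_C0_algebra_via_def Let_def by blast

lemma chi_equivariant: "g \<in> carrier G \<Longrightarrow> f \<in> C0 TY \<Longrightarrow>
    chi (transl TY actY g f) = mact G (C0 TX) (transl TX act) g (chi f)"
  using via unfolding G_C0_algebra_via_def Let_def by blast

lemma chi_dense: "a \<in> C0 TX \<Longrightarrow> e > 0 \<Longrightarrow> \<exists>(n::nat) fs bs. (\<forall>i<n. fs i \<in> C0 TY \<and> bs i \<in> C0 TX) \<and>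
    (\<forall>x\<in>topspace TX. norm (a x - (\<Sum>i<n. fst (chi (fs i)) (bs i) x)) < e)"
  using via unfolding G_C0_algebra_via_def Let_def by blast

lemma chi_left_in: "f \<in> C0 TY \<Longrightarrow> b \<in> C0 TX \<Longrightarrow> fst (chi f) b \<in> C0 TX"
  using chi_multiplier unfolding multipliers_def by fastforce

definition character_at :: "'x \<Rightarrow> ('y \<Rightarrow> complex) \<Rightarrow> complex" where
  "character_at x f = multiplier_fun (C0 TX) (chi f) x"

lemma chi_left_apply: "f \<in> C0 TY \<Longrightarrow> b \<in> C0 TX \<Longrightarrow> fst (chi f) b x = character_at x f * b x"
  and chi_right_apply: "f \<in> C0 TY \<Longrightarrow> b \<in> C0 TX \<Longrightarrow> snd (chi f) b x = character_at x f * b x"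
  unfolding character_at_def by (intro multiplier_apply[OF lcX hsX chi_multiplier]; assumption)+

lemma C0_character_at:
  assumes x: "x \<in> topspace TX"
  shows "C0_character TY (character_at x)"
proof
  let ?w = "C0_witness (C0 TX) x"
  have w: "?w \<in> C0 TX" "?w x \<noteq> 0" using C0_witness[OF lcX hsX x] by auto
  note apply_w = chi_left_apply[OF _ w(1), where x = x]
  have cancel: "u = v" if "u * ?w x = v * ?w x" for u v using that w(2) by simp
  show "locally_compact_space TY" "Hausdorff_space TY" using lcY hsY by auto
  fix f h assume f: "f \<in> C0 TY" and h: "h \<in> C0 TY"
  show "character_at x (\<lambda>y. f y + h y) = character_at x f + character_at x h"
    by (rule cancel)
       (use apply_w[OF C0_add[OF f h]] apply_w[OF f] apply_w[OF h] w(1) in \<open>simp add: chi_add[OF f h] madd_def algebra_simps\<close>)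
  show "character_at x (fmul f h) = character_at x f * character_at x h"
    by (rule cancel)
       (use apply_w[OF C0_fmul[OF f h]] chi_left_apply[OF f chi_left_in[OF h w(1)], where x = x] apply_w[OF h] w(1) in \<open>auto simp: chi_mult[OF f h] mmult_def compose_def\<close>)
next
  let ?w = "C0_witness (C0 TX) x"
  have w: "?w \<in> C0 TX" "?w x \<noteq> 0" using C0_witness[OF lcX hsX x] by auto
  have cancel: "u = v" if "u * ?w x = v * ?w x" for u v using that w(2) by simp
  fix c f assume f: "f \<in> C0 TY"
  show "character_at x (\<lambda>y. c * f y) = c * character_at x f"
    by (rule cancel)
       (use chi_left_apply[OF C0_scale[OF f, where c = c] w(1), where x = x] chi_left_apply[OF f w(1), where x = x] w(1) in \<open>auto simp: chi_scale[OF f] mscale_def\<close>)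
  show "character_at x (fstar f) = cnj (character_at x f)"
    by (rule cancel)
       (use chi_left_apply[OF C0_fstar[OF f] w(1), where x = x]
          chi_right_apply[OF f C0_fstar[OF w(1)], where x = x] w(1) in \<open>simp add: chi_star[OF f] madj_def, auto simp: fstar_def\<close>)
qed

lemma character_at_nonzero:
  assumes x: "x \<in> topspace TX"
  shows "\<exists>f\<in>C0 TY. character_at x f \<noteq> 0"
proof (rule ccontr)
  assume "\<not> ?thesis"
  then have vanish: "fst (chi f) b x = 0" if "f \<in> C0 TY" "b \<in> C0 TX" for f b
    using chi_left_apply that by simp
  let ?w = "C0_witness (C0 TX) x"
  have w: "?w \<in> C0 TX" "?w x \<noteq> 0" using C0_witness[OF lcX hsX x] by auto
  then obtain n fs bs where "\<forall>i<(n::nat). fs i \<in> C0 TY \<and> bs i \<in> C0 TX"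
    and "norm (?w x - (\<Sum>i<n. fst (chi (fs i)) (bs i) x)) < norm (?w x)"
    using chi_dense[OF w(1), of "norm (?w x)"] x by auto
  then show False using vanish by simp
qed

definition base_map :: "'x \<Rightarrow> 'y" where
  "base_map x = (SOME y. y \<in> topspace TY \<and> (\<forall>f\<in>C0 TY. character_at x f = f y))"

lemma base_map:
  assumes x: "x \<in> topspace TX"
  shows "base_map x \<in> topspace TY" "\<And>f. f \<in> C0 TY \<Longrightarrow> character_at x f = f (base_map x)"
proof -
  interpret C0_character TY "character_at x" using C0_character_at[OF x] .
  have "\<exists>y. y \<in> topspace TY \<and> (\<forall>f\<in>C0 TY. character_at x f = f y)"
    using eq_eval character_at_nonzero[OF x] by blast
  from someI_ex[OF this]
  show "base_map x \<in> topspace TY" "\<And>f. f \<in> C0 TY \<Longrightarrow> character_at x f = f (base_map x)"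
    unfolding base_map_def by auto
qed

lemma chi_left_base_map:
  "f \<in> C0 TY \<Longrightarrow> b \<in> C0 TX \<Longrightarrow> x \<in> topspace TX \<Longrightarrow> fst (chi f) b x = f (base_map x) * b x"
  using chi_left_apply base_map by simp

lemma continuous_map_base_map: "continuous_map TX TY base_map"
  unfolding continuous_map_def
proof (intro conjI allI impI)
  show "base_map \<in> topspace TX \<rightarrow> topspace TY" using base_map(1) by blast
  fix U assume U: "openin TY U"
  show "openin TX {x \<in> topspace TX. base_map x \<in> U}"
  proof (subst openin_subopen, intro ballI)
    fix x assume "x \<in> {x \<in> topspace TX. base_map x \<in> U}"
    then have x: "x \<in> topspace TX" "base_map x \<in> U" by auto
    obtain f where f: "f \<in> C0 TY" "f (base_map x) = 1" "\<And>z. z \<notin> U \<Longrightarrow> f z = 0"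
      using C0_bump[OF lcY hsY U x(2)] by blast
    let ?w = "C0_witness (C0 TX) x"
    have w: "?w \<in> C0 TX" "?w x \<noteq> 0" using C0_witness[OF lcX hsX x(1)] by auto
    define T where "T = {z \<in> topspace TX. fst (chi f) ?w z \<in> - {0}}"
    have "openin TX T"
      unfolding T_def using continuous_map_C0[OF chi_left_in[OF f(1) w(1)]]
      by (rule openin_continuous_map_preimage) auto
    moreover have "x \<in> T"
      using x w chi_left_base_map[OF f(1) w(1) x(1)] f(2) by (simp add: T_def)
    moreover have "T \<subseteq> {x \<in> topspace TX. base_map x \<in> U}"
      using chi_left_base_map[OF f(1) w(1)] f(3) by (force simp: T_def)
    ultimately show "\<exists>T. openin TX T \<and> x \<in> T \<and> T \<subseteq> {x \<in> topspace TX. base_map x \<in> U}"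
      by blast
  qed
qed

text \<open>Equivariance of chi, tested on a function separating the two candidate points.\<close>
lemma base_map_equivariant:
  assumes x: "x \<in> topspace TX" and g: "g \<in> carrier G"
  shows "base_map (act x g) = actY (base_map x) g"
proof (rule ccontr)
  assume ne: "base_map (act x g) \<noteq> actY (base_map x) g"
  have grp: "group G" using tg by (rule topological_group_group)
  have xg: "act x g \<in> topspace TX" using right_action_in[OF raX x g] .
  obtain f where f: "f \<in> C0 TY" "f (actY (base_map x) g) = 1" "f (base_map (act x g)) = 0"
    using C0_separates_points[OF lcY hsY right_action_in[OF raY base_map(1)[OF x] g]
        base_map(1)[OF xg] not_sym[OF ne]] by blast
  let ?w = "C0_witness (C0 TX) x"
  let ?w' = "transl TX act (inv\<^bsub>G\<^esub> g) ?w"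
  have w: "?w \<in> C0 TX" "?w x \<noteq> 0" using C0_witness[OF lcX hsX x] by auto
  have w': "?w' \<in> C0 TX" using C0_transl[OF raX tg group.inv_closed[OF grp g] w(1)] .
  have "fst (chi (transl TY actY g f)) ?w x = ?w x"
    using chi_left_base_map[OF C0_transl[OF raY tg g f(1)] w(1) x] f(2) base_map(1)[OF x]
    by (simp add: transl_def)
  moreover have "fst (chi (transl TY actY g f)) ?w x = fst (chi f) ?w' (act x g)"
    using w(1) x by (simp add: chi_equivariant[OF g f(1)] mact_def) (simp add: transl_def)
  moreover have "fst (chi f) ?w' (act x g) = 0"
    using chi_left_base_map[OF f(1) w' xg] f(3) by simp
  ultimately show False using w(2) by simp
qed

lemma equivariant_map_base_map: "equivariant_map G TG TX act TY actY base_map"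
  using raX continuous_map_base_map base_map_equivariant by unfold_locales

end

lemma principal_G_C0_algebra_equivariant_map:
  assumes "topological_group G TG" "locally_compact_space TX" "Hausdorff_space TX"
    and "right_action G TG TX act"
    and "principal_G_C0_algebra G TG TX (transl TX act) TY actY"
  obtains p where "equivariant_map G TG TX act TY actY p"
proof -
  obtain chi where "G_C0_algebra_over G TG TX act TY actY chi"
    using assms unfolding principal_G_C0_algebra_def by (meson G_C0_algebra_over.intro)
  then show ?thesis using G_C0_algebra_over.equivariant_map_base_map that by blast
qed

lemma principal_G_C0_algebra_imp_principal_bundle:
  assumes "topological_group G TG" "locally_compact_space TX" "Hausdorff_space TX"
    and "right_action G TG TX act"
    and A: "principal_G_C0_algebra G TG TX (transl TX act) TY actY"
  shows "principal_bundle G TG TX act"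
proof -
  obtain p where "equivariant_map G TG TX act TY actY p"
    using principal_G_C0_algebra_equivariant_map[OF assms] .
  moreover have "principal_bundle G TG TY actY"
    using A by (simp add: principal_G_C0_algebra_def)
  ultimately show ?thesis by (rule equivariant_map.principal_bundle_pullback)
qed

lemma numerable_principal_G_C0_algebra_imp_numerable_principal_bundle:
  assumes "topological_group G TG" "locally_compact_space TX" "Hausdorff_space TX"
    and "right_action G TG TX act"
    and A: "numerable_principal_G_C0_algebra G TG TX (transl TX act) TY actY"
  shows "numerable_principal_bundle G TG TX act"
proof -
  obtain p where "equivariant_map G TG TX act TY actY p"
    using principal_G_C0_algebra_equivariant_map[OF assms(1-4)] A
    unfolding numerable_principal_G_C0_algebra_def by blast
  moreover have "numerable_principal_bundle G TG TY actY"
    using A by (simp add: numerable_principal_G_C0_algebra_def)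
  ultimately show ?thesis by (rule equivariant_map.numerable_principal_bundle_pullback)
qed

lemma numerable_principal_bundle_imp_principal_bundle:
  "numerable_principal_bundle G TG TX act \<Longrightarrow> principal_bundle G TG TX act"
  unfolding numerable_principal_bundle_def principal_bundle_def by blast

lemma principal_G_C0_algebra_self:
  assumes "topological_group G TG" "locally_compact_space TX" "Hausdorff_space TX"
    and "right_action G TG TX act" and "principal_bundle G TG TX act"
  shows "principal_G_C0_algebra G TG TX (transl TX act) TX act"
  unfolding principal_G_C0_algebra_def
  using assms G_C0_algebra_via_pointwise_multiplier[OF assms(2,3,1,4)] by blast

theorem mainTheorem9:
  fixes G :: "('g, 'm) monoid_scheme" and TG :: "'g topology"
    and TX :: "'x topology" and act :: "'x \<Rightarrow> 'g \<Rightarrow> 'x"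
  assumes "topological_group G TG"
    and "locally_compact_space TG" and "Hausdorff_space TG"
    and "locally_compact_space TX" and "Hausdorff_space TX"
    and "right_action G TG TX act"
  shows "((\<forall>(TY :: 'y topology) actY.
             principal_G_C0_algebra G TG TX (transl TX act) TY actY \<longrightarrow> principal_bundle G TG TX act) \<and>
          (principal_bundle G TG TX act \<longrightarrow>
             (\<exists>(TY :: 'x topology) actY. principal_G_C0_algebra G TG TX (transl TX act) TY actY)))
       \<and> ((\<forall>(TY :: 'y topology) actY.
             numerable_principal_G_C0_algebra G TG TX (transl TX act) TY actY \<longrightarrow>
               numerable_principal_bundle G TG TX act) \<and>
          (numerable_principal_bundle G TG TX act \<longrightarrow>
             (\<exists>(TY :: 'x topology) actY. numerable_principal_G_C0_algebra G TG TX (transl TX act) TY actY)))"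
proof (intro conjI allI impI)
  fix TY :: "'y topology" and actY
  show "principal_G_C0_algebra G TG TX (transl TX act) TY actY \<Longrightarrow> principal_bundle G TG TX act"
    by (rule principal_G_C0_algebra_imp_principal_bundle[OF assms(1,4,5,6)])
  show "numerable_principal_G_C0_algebra G TG TX (transl TX act) TY actY \<Longrightarrow>
      numerable_principal_bundle G TG TX act"
    by (rule numerable_principal_G_C0_algebra_imp_numerable_principal_bundle[OF assms(1,4,5,6)])
next
  assume "principal_bundle G TG TX act"
  then show "\<exists>(TY :: 'x topology) actY. principal_G_C0_algebra G TG TX (transl TX act) TY actY"
    using principal_G_C0_algebra_self[OF assms(1,4,5,6)] by blast
next
  assume "numerable_principal_bundle G TG TX act"
  then show "\<exists>(TY :: 'x topology) actY. numerable_principal_G_C0_algebra G TG TX (transl TX act) TY actY"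
    using principal_G_C0_algebra_self[OF assms(1,4,5,6)] numerable_principal_bundle_imp_principal_bundle
    unfolding numerable_principal_G_C0_algebra_def by blast
qed

end
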